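(* Let $n\ge2$ and let $\mathcal{H}=\{H_1,\dots,H_n\}$ be a family of graphs. Then $$\dim_l(K_n\circ\mathcal{H})=\sum_{i=1}^n\operatorname{adim}_l(H_i)+\max\{0,|I|-1\},$$ where $I=\{u_i\in V(K_n): H_i\in\mathcal{G}\}$. Furthermore, for a graph $H$: if $H\in\mathcal{G}$ then $\dim_l(K_n\circ H)=n\cdot\operatorname{adim}_l(H)+n-1$, and if $H\notin\mathcal{G}$ then $\dim_l(K_n\circ H)=n\cdot\operatorname{adim}_l(H)$.
   Context: All graphs are finite and simple with at least one vertex; $V(K_n)=\{u_1,\dots,u_n\}$. $d_G$ is shortest-path distance ($+\infty$ between components), $d_{G,2}=\min\{d_G,2\}$; $s$ distinguishes $x,y$ w.r.t. $d$ if $d(s,x)\ne d(s,y)$. $\dim_l(G)$: minimum size of $S\subseteq V(G)$ such that any two adjacent vertices are distinguished w.r.t. $d_G$ by some vertex of $S$. $\operatorname{adim}_l(H)$: minimum size of $S\subseteq V(H)$ such that any two adjacent vertices are distinguished w.r.t. $d_{H,2}$ by some vertex of $S$; minimum such sets are local adjacency bases. $\mathcal{G}$: class of graphs $H$ such that every local adjacency basis $B$ of $H$ satisfies $B\subseteq N_H(v)$ for some $v\in V(H)$. Lexicographic product $G\circ\mathcal{H}$: vertex set $\bigcup_i\{u_i\}\times V(H_i)$, $(u_i,v)\sim(u_j,w)$ iff $u_iu_j\in E(G)$, or $i=j$ and $vw\in E(H_i)$; $G\circ H$ means all $H_i\cong H$. *)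

theory Defs
  imports "HOL-Library.Extended_Nat"
begin

type_synonym 'a graph = "'a set \<times> ('a \<times> 'a) set"

definition is_graph :: "'a graph \<Rightarrow> bool" where
  "is_graph G \<longleftrightarrow> finite (fst G) \<and> fst G \<noteq> {} \<and> snd G \<subseteq> fst G \<times> fst G
     \<and> sym (snd G) \<and> irrefl (snd G)"

definition gdist :: "'a graph \<Rightarrow> 'a \<Rightarrow> 'a \<Rightarrow> enat" where
  "gdist G x y = (if \<exists>k. (x, y) \<in> (snd G) ^^ k
                  then enat (LEAST k. (x, y) \<in> (snd G) ^^ k) else \<infinity>)"

definition gdist2 :: "'a graph \<Rightarrow> 'a \<Rightarrow> 'a \<Rightarrow> enat" where
  "gdist2 G x y = min (gdist G x y) 2"

definition adj_resolving :: "'a graph \<Rightarrow> ('a \<Rightarrow> 'a \<Rightarrow> enat) \<Rightarrow> 'a set \<Rightarrow> bool" where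
  "adj_resolving G d S \<longleftrightarrow> S \<subseteq> fst G \<and>
     (\<forall>x y. (x, y) \<in> snd G \<longrightarrow> (\<exists>s\<in>S. d s x \<noteq> d s y))"

definition local_metric_dim :: "'a graph \<Rightarrow> nat" where
  "local_metric_dim G = Min {card S | S. adj_resolving G (gdist G) S}"

definition local_adj_dim :: "'a graph \<Rightarrow> nat" where
  "local_adj_dim G = Min {card S | S. adj_resolving G (gdist2 G) S}"

definition local_adj_basis :: "'a graph \<Rightarrow> 'a set \<Rightarrow> bool" where
  "local_adj_basis G B \<longleftrightarrow> adj_resolving G (gdist2 G) B \<and> card B = local_adj_dim G"

definition nbhd :: "'a graph \<Rightarrow> 'a \<Rightarrow> 'a set" where
  "nbhd G v = {u. (v, u) \<in> snd G}"

definition classG :: "'a graph \<Rightarrow> bool" where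
  "classG H \<longleftrightarrow> (\<forall>B. local_adj_basis H B \<longrightarrow> (\<exists>v\<in>fst H. B \<subseteq> nbhd H v))"

text \<open>Lexicographic product K_n \<circ> {H_1,...,H_n}; vertex u_i of K_n is represented by i.\<close>
definition lex_Kn :: "nat \<Rightarrow> (nat \<Rightarrow> 'a graph) \<Rightarrow> (nat \<times> 'a) graph" where
  "lex_Kn n H =
    ({(i, v). i \<in> {1..n} \<and> v \<in> fst (H i)},
     {((i, v), (j, w)). i \<in> {1..n} \<and> j \<in> {1..n} \<and> v \<in> fst (H i) \<and> w \<in> fst (H j)
        \<and> (i \<noteq> j \<or> (i = j \<and> (v, w) \<in> snd (H i)))})"

end

theory Submission
  imports Defs
begin

text \<open>Every vertex of \<open>K\<^sub>n \<circ> \<H>\<close> is within distance 2 of every other vertex, so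
  distances in the product are truncated distances: two vertices of the same copy \<open>H\<^sub>i\<close> are
  distinguished only by vertices of that copy, via \<open>d\<^sub>H\<^sub>,\<^sub>2\<close>, and two vertices in different copies
  \<open>H\<^sub>i, H\<^sub>j\<close> are distinguished exactly by the vertices of \<open>S \<inter> H\<^sub>i\<close> (or \<open>S \<inter> H\<^sub>j\<close>) not adjacent
  to them. Hence \<open>S\<close> resolves the product iff every slice \<open>S \<inter> H\<^sub>i\<close> is an adjacency resolving set
  of \<open>H\<^sub>i\<close> and at most one slice is contained in a neighbourhood. Within a graph of class \<open>\<G>\<close> a
  resolving set outside every neighbourhood needs one vertex more than a basis, and one
  suffices: add a dominating vertex to a basis. So all copies in \<open>\<G>\<close> but one pay one extra vertex.\<close>

definition trunc_dist :: "('a \<times> 'a) set \<Rightarrow> 'a \<Rightarrow> 'a \<Rightarrow> enat" where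
  "trunc_dist E s x = (if s = x then 0 else if (s, x) \<in> E then 1 else 2)"

lemma gdist_le: "(x, y) \<in> snd G ^^ k \<Longrightarrow> gdist G x y \<le> enat k"
  unfolding gdist_def by (auto intro: Least_le)

lemma gdist_ge:
  assumes "\<And>k. (x, y) \<in> snd G ^^ k \<Longrightarrow> m \<le> k"
  shows "enat m \<le> gdist G x y"
proof (cases "\<exists>k. (x, y) \<in> snd G ^^ k")
  case True
  then have "(x, y) \<in> snd G ^^ (LEAST k. (x, y) \<in> snd G ^^ k)" by (rule LeastI_ex)
  with True show ?thesis unfolding gdist_def by (simp add: assms)
qed (simp add: gdist_def)

lemma relpow_ge_2:
  assumes "(x, y) \<in> R ^^ k" "x \<noteq> y" "(x, y) \<notin> R"
  shows "2 \<le> k"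
proof -
  have "k \<noteq> 0" using assms(1,2) by (cases k) auto
  moreover have "k \<noteq> 1" using assms(1,3) by auto
  ultimately show ?thesis by linarith
qed

lemma gdist_self: "gdist G x x = 0"
proof -
  have "gdist G x x \<le> enat 0" by (rule gdist_le) simp
  then show ?thesis by (simp add: zero_enat_def[symmetric])
qed

lemma gdist_edge:
  assumes "x \<noteq> y" "(x, y) \<in> snd G"
  shows "gdist G x y = 1"
proof -
  have "gdist G x y \<le> enat 1" using assms by (intro gdist_le) simp
  moreover have "enat 1 \<le> gdist G x y"
    using assms(1) by (intro gdist_ge) (auto simp: Suc_le_eq intro: Nat.gr0I)
  ultimately show ?thesis by (simp add: one_enat_def)
qed

lemma gdist_ge_2:
  assumes "x \<noteq> y" "(x, y) \<notin> snd G"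
  shows "2 \<le> gdist G x y"
proof -
  have "enat 2 \<le> gdist G x y" by (rule gdist_ge) (rule relpow_ge_2[OF _ assms])
  then show ?thesis by (simp add: numeral_eq_enat)
qed

lemma gdist_eq_2:
  assumes "x \<noteq> y" "(x, y) \<notin> snd G" "(x, z) \<in> snd G" "(z, y) \<in> snd G"
  shows "gdist G x y = 2"
proof -
  have "(x, y) \<in> snd G ^^ 2" using assms(3,4) by (auto simp: numeral_2_eq_2)
  then have "gdist G x y \<le> 2" unfolding numeral_eq_enat by (rule gdist_le)
  then show ?thesis using gdist_ge_2[OF assms(1,2)] by (rule order_antisym)
qed

lemma gdist2_eq_trunc_dist: "gdist2 G = trunc_dist (snd G)"
proof (intro ext)
  fix s x
  consider "s = x" | "s \<noteq> x" "(s, x) \<in> snd G" | "s \<noteq> x" "(s, x) \<notin> snd G" by blast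
  then show "gdist2 G s x = trunc_dist (snd G) s x"
    by cases (simp_all add: gdist2_def trunc_dist_def gdist_self gdist_edge gdist_ge_2 min_absorb2)
qed

lemma trunc_dist_eq_1_iff: "trunc_dist E s x = 1 \<longleftrightarrow> s \<noteq> x \<and> (s, x) \<in> E"
  by (simp add: trunc_dist_def)

lemma finite_cards_of_bounded:
  assumes "finite V" "\<And>S. Q S \<Longrightarrow> S \<subseteq> V"
  shows "finite {card S |S. Q S}"
proof (rule finite_subset)
  show "{card S |S. Q S} \<subseteq> {..card V}" using assms card_mono by fastforce
qed simp

lemma Min_card_le:
  assumes "finite V" "\<And>S. Q S \<Longrightarrow> S \<subseteq> V" "Q S"
  shows "Min {card S |S. Q S} \<le> card S"
  using finite_cards_of_bounded[OF assms(1,2)] assms(3) by (intro Min_le) auto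

lemma Min_card_attained:
  assumes "finite V" "\<And>S. Q S \<Longrightarrow> S \<subseteq> V" "Q S0"
  obtains S where "Q S" "card S = Min {card S |S. Q S}"
proof -
  have "Min {card S |S. Q S} \<in> {card S |S. Q S}"
    using finite_cards_of_bounded[OF assms(1,2)] assms(3) by (intro Min_in) auto
  then show ?thesis using that by auto
qed

lemma Min_card_eqI:
  assumes "finite V" "\<And>S. Q S \<Longrightarrow> S \<subseteq> V" "Q S0" "card S0 = m" "\<And>S. Q S \<Longrightarrow> m \<le> card S"
  shows "Min {card S |S. Q S} = m"
  using finite_cards_of_bounded[OF assms(1,2)] assms(3-5) by (intro Min_eqI) auto

lemma is_graph_edgeD:
  assumes "is_graph G" "(x, y) \<in> snd G"
  shows "(y, x) \<in> snd G" "x \<noteq> y" "x \<in> fst G" "y \<in> fst G"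
  using assms unfolding is_graph_def irrefl_def by (auto dest: symD)

lemma adj_resolving_vertices: "is_graph G \<Longrightarrow> adj_resolving G (gdist2 G) (fst G)"
  unfolding adj_resolving_def gdist2_eq_trunc_dist
  by (fastforce simp: trunc_dist_def dest: is_graph_edgeD)

lemma local_adj_basis_exists:
  assumes "is_graph G"
  obtains B where "local_adj_basis G B"
proof -
  have fin: "finite (fst G)" using assms by (simp add: is_graph_def)
  have sub: "\<And>S. adj_resolving G (gdist2 G) S \<Longrightarrow> S \<subseteq> fst G" by (simp add: adj_resolving_def)
  obtain B where "adj_resolving G (gdist2 G) B" "card B = Min {card S |S. adj_resolving G (gdist2 G) S}"
    by (rule Min_card_attained[where Q = "adj_resolving G (gdist2 G)",
          OF fin sub adj_resolving_vertices[OF assms]])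
  then show ?thesis using that by (simp add: local_adj_basis_def local_adj_dim_def)
qed

lemma local_adj_dim_le:
  assumes "is_graph G" "adj_resolving G (gdist2 G) S"
  shows "local_adj_dim G \<le> card S"
  unfolding local_adj_dim_def using assms
  by (intro Min_card_le[of "fst G"]) (auto simp: is_graph_def adj_resolving_def)

definition dominated :: "'a graph \<Rightarrow> 'a set \<Rightarrow> bool" where
  "dominated G T \<longleftrightarrow> (\<exists>v\<in>fst G. T \<subseteq> nbhd G v)"

text \<open>If some \<open>u\<close> dominated \<open>insert v B\<close>, then \<open>u\<close> and \<open>v\<close> would be adjacent and every vertex
  of \<open>B\<close> adjacent to both, so \<open>B\<close> would not distinguish them.\<close>
lemma dominated_resolving_insert:
  assumes G: "is_graph G" and R: "adj_resolving G (gdist2 G) B"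
    and v: "v \<in> fst G" "B \<subseteq> nbhd G v"
  shows "adj_resolving G (gdist2 G) (insert v B) \<and> \<not> dominated G (insert v B)"
proof
  show "adj_resolving G (gdist2 G) (insert v B)" using R v by (auto simp: adj_resolving_def)
  show "\<not> dominated G (insert v B)"
  proof
    assume "dominated G (insert v B)"
    then obtain u where u: "v \<in> nbhd G u" "B \<subseteq> nbhd G u" by (auto simp: dominated_def)
    then have "(u, v) \<in> snd G" by (simp add: nbhd_def)
    then obtain b where b: "b \<in> B" "trunc_dist (snd G) b u \<noteq> trunc_dist (snd G) b v"
      using R unfolding adj_resolving_def gdist2_eq_trunc_dist by blast
    then have "(u, b) \<in> snd G" "(v, b) \<in> snd G" using u v by (auto simp: nbhd_def)
    then show False using b(2) is_graph_edgeD[OF G] by (simp add: trunc_dist_def)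
  qed
qed

lemma undominated_resolving_exists:
  assumes G: "is_graph G"
  obtains T where "adj_resolving G (gdist2 G) T" "\<not> dominated G T"
    "card T = local_adj_dim G + (if classG G then 1 else 0)"
proof (cases "classG G")
  case False
  then obtain B where "local_adj_basis G B" "\<not> dominated G B" by (auto simp: classG_def dominated_def)
  then show ?thesis using that False by (auto simp: local_adj_basis_def)
next
  case True
  obtain B where B: "local_adj_basis G B" using local_adj_basis_exists[OF G] .
  then obtain v where v: "v \<in> fst G" "B \<subseteq> nbhd G v" using True by (auto simp: classG_def)
  have "finite B" using B G finite_subset
    by (auto simp: local_adj_basis_def adj_resolving_def is_graph_def)
  moreover have "v \<notin> B" using v is_graph_edgeD(2)[OF G] by (auto simp: nbhd_def)
  ultimately have "card (insert v B) = local_adj_dim G + 1"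
    using B by (simp add: local_adj_basis_def)
  moreover have "adj_resolving G (gdist2 G) (insert v B)" "\<not> dominated G (insert v B)"
    using dominated_resolving_insert[OF G _ v] B by (auto simp: local_adj_basis_def)
  ultimately show ?thesis using that True by simp
qed

lemma classG_undominated_card:
  assumes "is_graph G" "classG G" "adj_resolving G (gdist2 G) T" "\<not> dominated G T"
  shows "local_adj_dim G + 1 \<le> card T"
proof -
  have "card T \<noteq> local_adj_dim G"
    using assms(2-4) by (auto simp: classG_def dominated_def local_adj_basis_def)
  then show ?thesis using local_adj_dim_le[OF assms(1,3)] by linarith
qed

lemma sum_plus_indicator:
  "finite A \<Longrightarrow> (\<Sum>i\<in>A. f i + (if i \<in> B then 1 else 0)) = sum f A + card (A \<inter> B)"
  by (simp add: sum.distrib sum.If_cases)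

lemma adj_resolving_cong:
  assumes E: "snd G \<subseteq> fst G \<times> fst G"
    and d: "\<And>s x. s \<in> fst G \<Longrightarrow> x \<in> fst G \<Longrightarrow> d1 s x = d2 s x"
  shows "adj_resolving G d1 S \<longleftrightarrow> adj_resolving G d2 S"
proof (cases "S \<subseteq> fst G")
  case True
  have "(\<exists>s\<in>S. d1 s x \<noteq> d1 s y) \<longleftrightarrow> (\<exists>s\<in>S. d2 s x \<noteq> d2 s y)" if "(x, y) \<in> snd G" for x y
  proof (rule bex_cong[OF refl])
    fix s assume "s \<in> S"
    then have "s \<in> fst G" "x \<in> fst G" "y \<in> fst G" using that True E by auto
    then show "d1 s x \<noteq> d1 s y \<longleftrightarrow> d2 s x \<noteq> d2 s y" by (simp add: d)
  qed
  then show ?thesis by (simp add: adj_resolving_def)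
qed (simp add: adj_resolving_def)

definition slice :: "(nat \<times> 'a) set \<Rightarrow> nat \<Rightarrow> 'a set" where
  "slice S i = {v. (i, v) \<in> S}"

locale lex_Kn_family =
  fixes n :: nat and H :: "nat \<Rightarrow> 'a graph"
  assumes n_ge_2: "2 \<le> n" and graphs: "\<And>i. i \<in> {1..n} \<Longrightarrow> is_graph (H i)"
begin

abbreviation L :: "(nat \<times> 'a) graph" where "L \<equiv> lex_Kn n H"

lemma vertex_iff: "(i, v) \<in> fst L \<longleftrightarrow> i \<in> {1..n} \<and> v \<in> fst (H i)"
  by (simp add: lex_Kn_def)

lemma edge_iff:
  "((i, v), (j, w)) \<in> snd L \<longleftrightarrow> (i, v) \<in> fst L \<and> (j, w) \<in> fst L \<and> (i \<noteq> j \<or> (v, w) \<in> snd (H i))"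
  by (auto simp: lex_Kn_def)

lemma vertices_eq_Sigma: "fst L = (SIGMA i:{1..n}. fst (H i))"
  by (auto simp: lex_Kn_def)

lemma edges_subset: "snd L \<subseteq> fst L \<times> fst L"
  by (auto simp: lex_Kn_def)

lemma slice_subset: "S \<subseteq> fst L \<Longrightarrow> i \<in> {1..n} \<Longrightarrow> slice S i \<subseteq> fst (H i)"
  by (auto simp: slice_def vertex_iff)

lemma card_eq_sum_slices:
  assumes "S \<subseteq> fst L"
  shows "card S = (\<Sum>i=1..n. card (slice S i))"
proof -
  have "S = (SIGMA i:{1..n}. slice S i)"
    using assms by (auto simp: slice_def vertex_iff)
  moreover have "finite (slice S i)" if "i \<in> {1..n}" for i
    using slice_subset[OF assms that] graphs[OF that] finite_subset by (auto simp: is_graph_def)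
  ultimately show ?thesis by (metis card_SigmaI finite_atLeastAtMost)
qed

text \<open>Two vertices in the same copy \<open>H i\<close> have a common neighbour in any other copy, so the
  product has diameter at most 2.\<close>
lemma gdist_eq_trunc_dist:
  assumes "s \<in> fst L" "x \<in> fst L"
  shows "gdist L s x = trunc_dist (snd L) s x"
proof (cases "s = x \<or> (s, x) \<in> snd L")
  case True
  then show ?thesis by (auto simp: gdist_self gdist_edge trunc_dist_def)
next
  case False
  obtain i v w where sx: "s = (i, v)" "x = (i, w)"
    using assms False by (cases s, cases x) (auto simp: edge_iff)
  define k where "k = (if i = 1 then 2 else (1::nat))"
  have k: "k \<in> {1..n}" "k \<noteq> i" using n_ge_2 assms sx by (auto simp: k_def vertex_iff)
  obtain y where "y \<in> fst (H k)" using graphs[OF k(1)] by (auto simp: is_graph_def)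
  then have "(s, (k, y)) \<in> snd L" "((k, y), x) \<in> snd L"
    using assms sx k by (auto simp: edge_iff vertex_iff)
  then have "gdist L s x = 2" using False by (intro gdist_eq_2) simp_all
  then show ?thesis using False by (simp add: trunc_dist_def)
qed

lemma trunc_dist_lex:
  assumes "(k, x) \<in> fst L" "(i, v) \<in> fst L"
  shows "trunc_dist (snd L) (k, x) (i, v) = (if k = i then trunc_dist (snd (H i)) x v else 1)"
  using assms by (auto simp: trunc_dist_def edge_iff)

lemma adj_resolving_iff_trunc:
  "adj_resolving L (gdist L) S \<longleftrightarrow> adj_resolving L (trunc_dist (snd L)) S"
  by (rule adj_resolving_cong[OF edges_subset gdist_eq_trunc_dist])

lemma slice_resolving:
  assumes R: "adj_resolving L (trunc_dist (snd L)) S" and i: "i \<in> {1..n}"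
  shows "adj_resolving (H i) (gdist2 (H i)) (slice S i)"
  unfolding adj_resolving_def gdist2_eq_trunc_dist
proof (intro conjI allI impI)
  have SV: "S \<subseteq> fst L" using R by (simp add: adj_resolving_def)
  then show "slice S i \<subseteq> fst (H i)" using i by (rule slice_subset)
  fix v w assume e: "(v, w) \<in> snd (H i)"
  then have vw: "(i, v) \<in> fst L" "(i, w) \<in> fst L"
    using i is_graph_edgeD[OF graphs[OF i]] by (auto simp: vertex_iff)
  with e have "((i, v), (i, w)) \<in> snd L" by (simp add: edge_iff)
  then obtain k x where kx: "(k, x) \<in> S"
      "trunc_dist (snd L) (k, x) (i, v) \<noteq> trunc_dist (snd L) (k, x) (i, w)"
    using R unfolding adj_resolving_def by fast
  moreover have "(k, x) \<in> fst L" using kx SV by blast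
  ultimately show "\<exists>x\<in>slice S i. trunc_dist (snd (H i)) x v \<noteq> trunc_dist (snd (H i)) x w"
    using vw by (auto simp: trunc_dist_lex slice_def split: if_splits)
qed

text \<open>If \<open>slice S i\<close> and \<open>slice S j\<close> are dominated by \<open>v\<close> and \<open>w\<close>, every vertex of \<open>S\<close> is at
  distance 1 from both of the adjacent vertices \<open>(i, v)\<close> and \<open>(j, w)\<close>.\<close>
lemma dominated_slice_unique:
  assumes R: "adj_resolving L (trunc_dist (snd L)) S"
    and i: "i \<in> {1..n}" and j: "j \<in> {1..n}"
    and di: "dominated (H i) (slice S i)" and dj: "dominated (H j) (slice S j)"
  shows "i = j"
proof (rule ccontr)
  assume ij: "i \<noteq> j"
  obtain v where v: "v \<in> fst (H i)" "slice S i \<subseteq> nbhd (H i) v" using di by (auto simp: dominated_def)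
  obtain w where w: "w \<in> fst (H j)" "slice S j \<subseteq> nbhd (H j) w" using dj by (auto simp: dominated_def)
  have vw: "(i, v) \<in> fst L" "(j, w) \<in> fst L" using i j v w by (simp_all add: vertex_iff)
  with ij have "((i, v), (j, w)) \<in> snd L" by (simp add: edge_iff)
  then obtain k x where kx: "(k, x) \<in> S"
      "trunc_dist (snd L) (k, x) (i, v) \<noteq> trunc_dist (snd L) (k, x) (j, w)"
    using R unfolding adj_resolving_def by fast
  have kxV: "(k, x) \<in> fst L" using kx R by (auto simp: adj_resolving_def)
  have "trunc_dist (snd L) (k, x) (i, v) = 1"
  proof (cases "k = i")
    case True
    then have "(v, x) \<in> snd (H i)" using kx v by (auto simp: slice_def nbhd_def)
    then have "(x, v) \<in> snd (H i)" "x \<noteq> v" using is_graph_edgeD[OF graphs[OF i]] by auto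
    then show ?thesis using True trunc_dist_lex[OF kxV vw(1)] by (simp add: trunc_dist_def)
  qed (use kxV vw in \<open>simp add: trunc_dist_lex\<close>)
  moreover have "trunc_dist (snd L) (k, x) (j, w) = 1"
  proof (cases "k = j")
    case True
    then have "(w, x) \<in> snd (H j)" using kx w by (auto simp: slice_def nbhd_def)
    then have "(x, w) \<in> snd (H j)" "x \<noteq> w" using is_graph_edgeD[OF graphs[OF j]] by auto
    then show ?thesis using True trunc_dist_lex[OF kxV vw(2)] by (simp add: trunc_dist_def)
  qed (use kxV vw in \<open>simp add: trunc_dist_lex\<close>)
  ultimately show False using kx(2) by simp
qed

lemma undominated_slice_distinguishes:
  assumes SV: "S \<subseteq> fst L" and ij: "i \<noteq> j" and vw: "(i, v) \<in> fst L" "(j, w) \<in> fst L"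
    and nd: "\<not> dominated (H i) (slice S i)"
  shows "\<exists>s\<in>S. trunc_dist (snd L) s (i, v) \<noteq> trunc_dist (snd L) s (j, w)"
proof -
  have i: "i \<in> {1..n}" "v \<in> fst (H i)" using vw by (simp_all add: vertex_iff)
  then obtain x where x: "(i, x) \<in> S" "(v, x) \<notin> snd (H i)"
    using nd by (auto simp: dominated_def nbhd_def slice_def)
  then have "(x, v) \<notin> snd (H i)" using is_graph_edgeD(1)[OF graphs[OF i(1)]] by blast
  moreover have "(i, x) \<in> fst L" using x SV by blast
  ultimately show ?thesis
    using x ij vw by (intro bexI[of _ "(i, x)"]) (auto simp: trunc_dist_lex trunc_dist_eq_1_iff)
qed

lemma adj_resolving_lex_KnI:
  assumes SV: "S \<subseteq> fst L"
    and slices: "\<And>i. i \<in> {1..n} \<Longrightarrow> adj_resolving (H i) (gdist2 (H i)) (slice S i)"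
    and unique: "\<And>i j. i \<in> {1..n} \<Longrightarrow> j \<in> {1..n} \<Longrightarrow> dominated (H i) (slice S i)
                   \<Longrightarrow> dominated (H j) (slice S j) \<Longrightarrow> i = j"
  shows "adj_resolving L (trunc_dist (snd L)) S"
  unfolding adj_resolving_def
proof (intro conjI allI impI)
  fix p q assume e: "(p, q) \<in> snd L"
  obtain i v j w where pq: "p = (i, v)" "q = (j, w)" by fastforce
  have vw: "(i, v) \<in> fst L" "(j, w) \<in> fst L" and ij: "i \<noteq> j \<or> (v, w) \<in> snd (H i)"
    using e by (simp_all add: pq edge_iff)
  show "\<exists>s\<in>S. trunc_dist (snd L) s p \<noteq> trunc_dist (snd L) s q"
  proof (cases "i = j")
    case True
    then have i: "i \<in> {1..n}" and "(v, w) \<in> snd (H i)" using vw ij by (simp_all add: vertex_iff)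
    then obtain x where x: "x \<in> slice S i" "trunc_dist (snd (H i)) x v \<noteq> trunc_dist (snd (H i)) x w"
      using slices[OF i] unfolding adj_resolving_def gdist2_eq_trunc_dist by blast
    moreover have "(i, x) \<in> fst L" using x SV by (simp add: slice_def subset_eq)
    ultimately show ?thesis
      using True pq vw by (intro bexI[of _ "(i, x)"]) (simp_all add: trunc_dist_lex slice_def)
  next
    case False
    then have "\<not> dominated (H i) (slice S i) \<or> \<not> dominated (H j) (slice S j)"
      using unique vw by (auto simp: vertex_iff)
    then show ?thesis
      using undominated_slice_distinguishes[OF SV False vw]
        undominated_slice_distinguishes[OF SV False[symmetric] vw(2,1)] pq by (metis (no_types))
  qed
qed (rule SV)

lemma adj_resolving_lex_Kn_iff:
  "adj_resolving L (gdist L) S \<longleftrightarrow> S \<subseteq> fst L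
     \<and> (\<forall>i\<in>{1..n}. adj_resolving (H i) (gdist2 (H i)) (slice S i))
     \<and> (\<forall>i\<in>{1..n}. \<forall>j\<in>{1..n}. dominated (H i) (slice S i) \<longrightarrow> dominated (H j) (slice S j) \<longrightarrow> i = j)"
  (is "_ \<longleftrightarrow> _ \<and> ?slices \<and> ?unique")
  unfolding adj_resolving_iff_trunc
proof
  assume R: "adj_resolving L (trunc_dist (snd L)) S"
  then show "S \<subseteq> fst L \<and> ?slices \<and> ?unique"
    using slice_resolving[OF R] dominated_slice_unique[OF R] by (simp add: adj_resolving_def)
qed (intro adj_resolving_lex_KnI; blast)

lemma card_adj_resolving_lex_Kn_ge:
  assumes R: "adj_resolving L (gdist L) S"
  shows "(\<Sum>i=1..n. local_adj_dim (H i)) + (card {i\<in>{1..n}. classG (H i)} - 1) \<le> card S"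
proof -
  define I where "I = {i\<in>{1..n}. classG (H i)}"
  define D where "D = {i\<in>{1..n}. dominated (H i) (slice S i)}"
  have SV: "S \<subseteq> fst L"
    and slices: "\<And>i. i \<in> {1..n} \<Longrightarrow> adj_resolving (H i) (gdist2 (H i)) (slice S i)"
    and unique: "\<And>i j. i \<in> D \<Longrightarrow> j \<in> D \<Longrightarrow> i = j"
    using R unfolding adj_resolving_lex_Kn_iff D_def by blast+
  have "card D \<le> 1" using unique by (simp add: D_def card_le_Suc0_iff_eq)
  then have "card I - 1 \<le> card (I - D)" using diff_card_le_card_Diff[of D I] by (simp add: D_def)
  also have "card (I - D) = card ({1..n} \<inter> (I - D))" by (rule arg_cong[where f = card]) (auto simp: I_def)
  finally have "(\<Sum>i=1..n. local_adj_dim (H i)) + (card I - 1)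
      \<le> (\<Sum>i=1..n. local_adj_dim (H i) + (if i \<in> I - D then 1 else 0))"
    unfolding sum_plus_indicator[OF finite_atLeastAtMost] by simp
  also have "\<dots> \<le> (\<Sum>i=1..n. card (slice S i))"
  proof (rule sum_mono)
    fix i assume i: "i \<in> {1..n}"
    show "local_adj_dim (H i) + (if i \<in> I - D then 1 else 0) \<le> card (slice S i)"
      using local_adj_dim_le[OF graphs[OF i] slices[OF i]]
        classG_undominated_card[OF graphs[OF i] _ slices[OF i]] i
      by (auto simp: I_def D_def)
  qed
  also have "\<dots> = card S" using card_eq_sum_slices[OF SV] by simp
  finally show ?thesis unfolding I_def .
qed

text \<open>Take a local adjacency basis in one copy \<open>H i0\<close> with \<open>H i0 \<in> \<G>\<close> (if there is one) and
  undominated adjacency resolving sets elsewhere; only the copies in \<open>\<G>\<close> other than \<open>i0\<close> pay an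
  extra vertex.\<close>
lemma adj_resolving_lex_Kn_card_exists:
  obtains S where "adj_resolving L (gdist L) S"
    "card S = (\<Sum>i=1..n. local_adj_dim (H i)) + (card {i\<in>{1..n}. classG (H i)} - 1)"
proof -
  define I where "I = {i\<in>{1..n}. classG (H i)}"
  define i0 where "i0 = (SOME i. i \<in> I)"
  have "\<forall>i\<in>{1..n}. \<exists>T. adj_resolving (H i) (gdist2 (H i)) T
      \<and> card T = local_adj_dim (H i) + (if i \<in> I - {i0} then 1 else 0)
      \<and> (i \<noteq> i0 \<longrightarrow> \<not> dominated (H i) T)"
  proof
    fix i assume i: "i \<in> {1..n}"
    show "\<exists>T. adj_resolving (H i) (gdist2 (H i)) T
      \<and> card T = local_adj_dim (H i) + (if i \<in> I - {i0} then 1 else 0)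
      \<and> (i \<noteq> i0 \<longrightarrow> \<not> dominated (H i) T)"
    proof (cases "i = i0")
      case True
      obtain B where "local_adj_basis (H i) B" using local_adj_basis_exists[OF graphs[OF i]] .
      then show ?thesis using True by (auto simp: local_adj_basis_def)
    next
      case False
      obtain T where "adj_resolving (H i) (gdist2 (H i)) T" "\<not> dominated (H i) T"
          "card T = local_adj_dim (H i) + (if classG (H i) then 1 else 0)"
        using undominated_resolving_exists[OF graphs[OF i]] .
      then show ?thesis using False i by (auto simp: I_def)
    qed
  qed
  then obtain T where T: "\<And>i. i \<in> {1..n} \<Longrightarrow> adj_resolving (H i) (gdist2 (H i)) (T i)"
      "\<And>i. i \<in> {1..n} \<Longrightarrow> card (T i) = local_adj_dim (H i) + (if i \<in> I - {i0} then 1 else 0)"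
      "\<And>i. i \<in> {1..n} \<Longrightarrow> i \<noteq> i0 \<Longrightarrow> \<not> dominated (H i) (T i)"
    by metis
  define S where "S = (SIGMA i:{1..n}. T i)"
  have slice_S: "slice S i = T i" if "i \<in> {1..n}" for i using that by (auto simp: S_def slice_def)
  have "T i \<subseteq> fst (H i)" if "i \<in> {1..n}" for i using T(1)[OF that] by (simp add: adj_resolving_def)
  then have SV: "S \<subseteq> fst L" by (force simp: S_def vertex_iff)
  have resolving: "adj_resolving L (gdist L) S"
    unfolding adj_resolving_lex_Kn_iff using SV T(1,3) by (metis slice_S)
  have "card S = (\<Sum>i=1..n. local_adj_dim (H i) + (if i \<in> I - {i0} then 1 else 0))"
    using card_eq_sum_slices[OF SV] T(2) slice_S by simp
  also have "\<dots> = (\<Sum>i=1..n. local_adj_dim (H i)) + card ({1..n} \<inter> (I - {i0}))"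
    by (rule sum_plus_indicator) simp
  also have "card ({1..n} \<inter> (I - {i0})) = card I - 1"
  proof -
    have "I \<noteq> {} \<Longrightarrow> i0 \<in> I" by (simp add: i0_def some_in_eq)
    moreover have "{1..n} \<inter> (I - {i0}) = I - {i0}" by (auto simp: I_def)
    ultimately show ?thesis by (cases "I = {}") (simp_all add: card_Diff_singleton)
  qed
  finally have "card S = (\<Sum>i=1..n. local_adj_dim (H i)) + (card I - 1)" .
  with resolving show ?thesis using that unfolding I_def by blast
qed

theorem local_metric_dim_lex_Kn:
  "local_metric_dim L = (\<Sum>i=1..n. local_adj_dim (H i)) + (card {i\<in>{1..n}. classG (H i)} - 1)"
proof -
  obtain S where S: "adj_resolving L (gdist L) S"
      "card S = (\<Sum>i=1..n. local_adj_dim (H i)) + (card {i\<in>{1..n}. classG (H i)} - 1)"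
    by (rule adj_resolving_lex_Kn_card_exists)
  have "finite (fst L)" using graphs by (auto simp: vertices_eq_Sigma is_graph_def)
  then show ?thesis unfolding local_metric_dim_def
  proof (rule Min_card_eqI[where Q = "adj_resolving L (gdist L)", OF _ _ S])
    show "\<And>S. adj_resolving L (gdist L) S \<Longrightarrow> S \<subseteq> fst L" by (simp add: adj_resolving_def)
  qed (rule card_adj_resolving_lex_Kn_ge)
qed

end

theorem corollary2:
  fixes n :: nat and H :: "nat \<Rightarrow> 'a graph" and H0 :: "'b graph"
  assumes "n \<ge> 2"
    and "\<forall>i\<in>{1..n}. is_graph (H i)"
    and "is_graph H0"
  shows "local_metric_dim (lex_Kn n H)
           = (\<Sum>i=1..n. local_adj_dim (H i)) + (card {i\<in>{1..n}. classG (H i)} - 1)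
     \<and> (classG H0 \<longrightarrow> local_metric_dim (lex_Kn n (\<lambda>_. H0)) = n * local_adj_dim H0 + n - 1)
     \<and> (\<not> classG H0 \<longrightarrow> local_metric_dim (lex_Kn n (\<lambda>_. H0)) = n * local_adj_dim H0)"
proof -
  interpret family: lex_Kn_family n H using assms by unfold_locales auto
  interpret uniform: lex_Kn_family n "\<lambda>_. H0" using assms by unfold_locales auto
  have "{i\<in>{1..n}. classG H0} = (if classG H0 then {1..n} else {})" by auto
  then have "card {i\<in>{1..n}. classG H0} = (if classG H0 then n else 0)" by simp
  then show ?thesis
    using family.local_metric_dim_lex_Kn uniform.local_metric_dim_lex_Kn assms(1) by auto
qed

end
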